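(* Let $A\in\mathbb{Z}^{m\times n}$, $b\in\mathbb{Z}^m$. If $Ax\leq b$ is totally dual $p$-adic and totally dual $q$-adic for distinct primes $p,q$, then $\{x:Ax\leq b\}$ is an integral polyhedron.
   Context: For a prime $p$, a $p$-adic rational is a number $a/p^k$ with $a,k\in\mathbb{Z}$, $k\ge0$; a vector is $p$-adic if all entries are $p$-adic rationals. A system $Ax\le b$ with integral $A,b$ is totally dual $p$-adic if for every integral $w$ for which $\min\{b^\top y: A^\top y=w,\ y\ge \mathbf{0}\}$ has an optimal solution, it has a $p$-adic optimal solution. A rational polyhedron is integral if every nonempty face of it contains an integral point. *)

theory Defs
  imports "HOL-Analysis.Analysis"
begin

definition padic_rat :: "nat \<Rightarrow> real \<Rightarrow> bool" where
  "padic_rat p r \<longleftrightarrow> (\<exists>(a::int) (k::nat). r = of_int a / (of_nat p) ^ k)"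

definition padic_vec :: "nat \<Rightarrow> real ^ 'm \<Rightarrow> bool" where
  "padic_vec p y \<longleftrightarrow> (\<forall>i. padic_rat p (y $ i))"

definition dual_feasible :: "int ^ 'n ^ 'm \<Rightarrow> int ^ 'n \<Rightarrow> (real ^ 'm) set" where
  "dual_feasible A w = {y. (\<forall>i. 0 \<le> y $ i) \<and>
      (\<forall>j. (\<Sum>i\<in>UNIV. y $ i * real_of_int (A $ i $ j)) = real_of_int (w $ j))}"

definition dual_obj :: "int ^ 'm \<Rightarrow> real ^ 'm \<Rightarrow> real" where
  "dual_obj b y = (\<Sum>i\<in>UNIV. real_of_int (b $ i) * y $ i)"

definition dual_optimal :: "int ^ 'n ^ 'm \<Rightarrow> int ^ 'm \<Rightarrow> int ^ 'n \<Rightarrow> real ^ 'm \<Rightarrow> bool" where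
  "dual_optimal A b w y \<longleftrightarrow> y \<in> dual_feasible A w \<and>
      (\<forall>y'\<in>dual_feasible A w. dual_obj b y \<le> dual_obj b y')"

definition totally_dual_padic :: "nat \<Rightarrow> int ^ 'n ^ 'm \<Rightarrow> int ^ 'm \<Rightarrow> bool" where
  "totally_dual_padic p A b \<longleftrightarrow>
     (\<forall>w :: int ^ 'n. (\<exists>y. dual_optimal A b w y) \<longrightarrow>
        (\<exists>y. dual_optimal A b w y \<and> padic_vec p y))"

definition polyhedron_of :: "int ^ 'n ^ 'm \<Rightarrow> int ^ 'm \<Rightarrow> (real ^ 'n) set" where
  "polyhedron_of A b = {x. \<forall>i. (\<Sum>j\<in>UNIV. real_of_int (A $ i $ j) * x $ j) \<le> real_of_int (b $ i)}"

definition integral_vec :: "real ^ 'n \<Rightarrow> bool" where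
  "integral_vec x \<longleftrightarrow> (\<forall>j. x $ j \<in> \<int>)"

definition integral_polyhedron :: "(real ^ 'n) set \<Rightarrow> bool" where
  "integral_polyhedron P \<longleftrightarrow> (\<forall>F. F face_of P \<and> F \<noteq> {} \<longrightarrow> (\<exists>x\<in>F. integral_vec x))"

end

theory Submission
  imports Defs
begin

text \<open>Let \<open>F\<close> be a nonempty face and \<open>x\<^sub>0 \<in> F\<close> a point whose set \<open>T\<close> of active rows is
  maximal; then \<open>{x. A\<^sub>T x = b\<^sub>T} \<subseteq> F\<close>. If this system had no integral solution, Kronecker's
  theorem would give \<open>y\<close> with \<open>y A\<^sub>T\<close> integral but \<open>y b\<^sub>T\<close> not. The fractional parts of \<open>y\<close>
  form a dual solution for the integral objective \<open>w = frac(y) A\<^sub>T\<close>, optimal by complementary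
  slackness with \<open>x\<^sub>0\<close>, whose value differs from \<open>y b\<^sub>T\<close> by an integer. But the optimal value
  is attained both at a \<open>p\<close>-adic and at a \<open>q\<close>-adic solution, so it is a \<open>p\<close>-adic and
  \<open>q\<close>-adic rational, hence an integer.\<close>

section \<open>\<open>p\<close>-adic rationals\<close>

lemma padic_rat_of_int: "padic_rat p (of_int a)"
  unfolding padic_rat_def by (rule exI[of _ a], rule exI[of _ 0]) simp

lemma padic_rat_add:
  assumes "p > 0" "padic_rat p x" "padic_rat p y"
  shows "padic_rat p (x + y)"
proof -
  obtain a k where a: "x = of_int a / of_nat p ^ k" using assms(2) unfolding padic_rat_def by blast
  obtain c l where c: "y = of_int c / of_nat p ^ l" using assms(3) unfolding padic_rat_def by blast
  have "x + y = of_int (a * int p ^ l + c * int p ^ k) / of_nat p ^ (k + l)"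
    using assms(1) by (simp add: a c field_simps power_add)
  then show ?thesis unfolding padic_rat_def by blast
qed

lemma padic_rat_of_int_mult:
  assumes "padic_rat p x"
  shows "padic_rat p (of_int c * x)"
proof -
  obtain a k where "x = of_int a / of_nat p ^ k" using assms unfolding padic_rat_def by blast
  then have "of_int c * x = of_int (c * a) / of_nat p ^ k" by simp
  then show ?thesis unfolding padic_rat_def by blast
qed

lemma padic_rat_sum:
  assumes "p > 0" "\<And>i. i \<in> S \<Longrightarrow> padic_rat p (f i)"
  shows "padic_rat p (\<Sum>i\<in>S. f i)"
  using assms(2)
  by (induction S rule: infinite_finite_induct)
    (auto simp: padic_rat_add[OF assms(1)] padic_rat_of_int[of p 0, simplified])

lemma padic_rat_mult_power_Ints:
  assumes "padic_rat p r"
  obtains k where "r * of_nat p ^ k \<in> \<int>"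
proof -
  obtain a k where a: "r = of_int a / of_nat p ^ k" using assms unfolding padic_rat_def by blast
  have "r * of_nat p ^ k \<in> \<int>"
    by (cases "p = 0 \<and> k > 0") (simp_all add: a)
  then show ?thesis by (rule that)
qed

lemma padic_rat_coprime_Ints:
  assumes "coprime p q" "padic_rat p r" "padic_rat q r"
  shows "r \<in> \<int>"
proof -
  obtain k where k: "r * of_nat p ^ k \<in> \<int>" using assms(2) by (rule padic_rat_mult_power_Ints)
  obtain l where l: "r * of_nat q ^ l \<in> \<int>" using assms(3) by (rule padic_rat_mult_power_Ints)
  have "coprime (int p ^ k) (int q ^ l)" using assms(1) by simp
  then obtain u v where "u * int p ^ k + v * int q ^ l = 1"
    using bezout_int[of "int p ^ k" "int q ^ l"] by auto
  then have "r = r * of_int (u * int p ^ k + v * int q ^ l)" by simp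
  also have "\<dots> = of_int u * (r * of_nat p ^ k) + of_int v * (r * of_nat q ^ l)"
    by (simp add: algebra_simps)
  also have "\<dots> \<in> \<int>" using k l by (intro Ints_add Ints_mult[OF Ints_of_int])
  finally show ?thesis .
qed

section \<open>Kronecker's theorem on integral solutions of linear systems\<close>

lemma sum_mult_eq_Gcd:
  fixes f :: "'j \<Rightarrow> int"
  assumes "finite J"
  obtains \<beta> where "(\<Sum>j\<in>J. \<beta> j * f j) = Gcd (f ` J)"
  using assms
proof (induction J arbitrary: thesis rule: finite_induct)
  case empty
  then show ?case by simp
next
  case (insert j J)
  obtain \<beta> where \<beta>: "(\<Sum>k\<in>J. \<beta> k * f k) = Gcd (f ` J)" using insert.IH by blast
  obtain u v where uv: "u * f j + v * Gcd (f ` J) = gcd (f j) (Gcd (f ` J))"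
    using bezout_int by blast
  define \<beta>' where "\<beta>' k = (if k = j then u else v * \<beta> k)" for k
  have "(\<Sum>k\<in>J. \<beta>' k * f k) = v * (\<Sum>k\<in>J. \<beta> k * f k)"
    using insert.hyps(2) by (auto simp: \<beta>'_def sum_distrib_left mult.assoc intro: sum.cong)
  then have "(\<Sum>k\<in>insert j J. \<beta>' k * f k) = Gcd (f ` insert j J)"
    using insert.hyps uv \<beta> by (simp add: \<beta>'_def)
  then show ?case by (rule insert.prems)
qed

text \<open>The columns \<open>j \<in> J\<close> of \<open>M\<close>, restricted to the rows \<open>I\<close>, generate a lattice \<open>L \<subseteq> \<real>\<^sup>I\<close>;
  \<open>c\<close> lies in the dual of its dual lattice \<open>{y. y \<bullet> L \<subseteq> \<int>}\<close>.\<close>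
definition in_bidual_lattice :: "('i \<Rightarrow> 'j \<Rightarrow> int) \<Rightarrow> 'i set \<Rightarrow> 'j set \<Rightarrow> ('i \<Rightarrow> real) \<Rightarrow> bool" where
  "in_bidual_lattice M I J c \<longleftrightarrow>
     (\<forall>y. (\<forall>j\<in>J. (\<Sum>i\<in>I. y i * of_int (M i j)) \<in> \<int>) \<longrightarrow> (\<Sum>i\<in>I. y i * c i) \<in> \<int>)"

lemma sum_mult_indicator_subset:
  fixes y f :: "'i \<Rightarrow> real"
  assumes "finite I" "I' \<subseteq> I"
  shows "(\<Sum>i\<in>I. (if i \<in> I' then y i else 0) * f i) = (\<Sum>i\<in>I'. y i * f i)"
proof -
  have "(\<Sum>i\<in>I. (if i \<in> I' then y i else 0) * f i) = (\<Sum>i\<in>I. if i \<in> I' then y i * f i else 0)"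
    by (rule sum.cong) auto
  also have "\<dots> = (\<Sum>i\<in>I'. y i * f i)"
    using assms by (simp add: sum.inter_restrict[symmetric] Int_absorb1)
  finally show ?thesis .
qed

lemma in_bidual_lattice_subset:
  fixes M :: "'i \<Rightarrow> 'j \<Rightarrow> int"
  assumes "in_bidual_lattice M I J c" "finite I" "I' \<subseteq> I"
  shows "in_bidual_lattice M I' J c"
  unfolding in_bidual_lattice_def
proof (intro allI impI)
  fix y :: "'i \<Rightarrow> real"
  assume "\<forall>j\<in>J. (\<Sum>i\<in>I'. y i * of_int (M i j)) \<in> \<int>"
  then show "(\<Sum>i\<in>I'. y i * c i) \<in> \<int>"
    using assms spec[OF assms(1)[unfolded in_bidual_lattice_def], of "\<lambda>i. if i \<in> I' then y i else 0"]
    by (simp add: sum_mult_indicator_subset)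
qed

lemma in_bidual_lattice_singleton:
  assumes "in_bidual_lattice M {i} J c" "finite J"
  obtains z where "c i = of_int (Gcd ((\<lambda>j. M i j) ` J)) * of_int z"
proof -
  define d where "d = Gcd ((\<lambda>j. M i j) ` J)"
  have dual_test: "t * c i \<in> \<int>" if "\<And>j. j \<in> J \<Longrightarrow> t * of_int (M i j) \<in> \<int>" for t
    using spec[OF assms(1)[unfolded in_bidual_lattice_def], of "\<lambda>_. t"] that by simp
  show ?thesis
  proof (cases "d = 0")
    case True
    then have all_Ints: "t * c i \<in> \<int>" for t
      using assms(2) by (intro dual_test) (force simp: d_def)
    have "c i = 0"
    proof (rule ccontr)
      assume "c i \<noteq> 0"
      then have "1 / (2 * c i) * c i = 1 / 2" by simp
      then have "(1 / 2 :: real) \<in> \<int>" using all_Ints by metis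
      moreover have "frac (1 / 2 :: real) = 1 / 2" by (simp add: frac_eq)
      ultimately show False by simp
    qed
    then show ?thesis using that[of 0] by simp
  next
    case False
    have "1 / of_int d * c i \<in> \<int>"
    proof (rule dual_test)
      fix j assume "j \<in> J"
      then have "d dvd M i j" unfolding d_def by simp
      then show "1 / of_int d * of_int (M i j) \<in> (\<int> :: real set)" using False by (auto elim!: dvdE)
    qed
    then obtain z where "c i / of_int d = of_int z" by (auto elim: Ints_cases)
    then show ?thesis using that[of z] False by (simp add: d_def field_simps)
  qed
qed

text \<open>Column operations that eliminate row \<open>i\<^sub>0\<close> once \<open>s i\<^sub>0 = d\<close>: a dual vector of the reduced
  system extends to one of the original system by choosing its \<open>i\<^sub>0\<close>-entry suitably.\<close>
lemma in_bidual_lattice_column_reduction: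
  fixes M :: "'i \<Rightarrow> 'j \<Rightarrow> int"
  assumes "in_bidual_lattice M (insert i0 I) J c" "finite I" "i0 \<notin> I"
    and "d \<noteq> 0" "\<And>j. j \<in> J \<Longrightarrow> M i0 j = d * q j" "c i0 = of_int d * of_int z"
  shows "in_bidual_lattice (\<lambda>i j. M i j - q j * s i) I J (\<lambda>i. c i - of_int z * of_int (s i))"
  unfolding in_bidual_lattice_def
proof (intro allI impI)
  fix y :: "'i \<Rightarrow> real"
  assume y: "\<forall>j\<in>J. (\<Sum>i\<in>I. y i * of_int (M i j - q j * s i)) \<in> \<int>"
  define \<sigma> where "\<sigma> = - (\<Sum>i\<in>I. y i * of_int (s i)) / of_int d"
  have d\<sigma>: "of_int d * \<sigma> = - (\<Sum>i\<in>I. y i * of_int (s i))"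
    using assms(4) by (simp add: \<sigma>_def)
  have sum_insert: "(\<Sum>i\<in>insert i0 I. (y(i0 := \<sigma>)) i * f i) = \<sigma> * f i0 + (\<Sum>i\<in>I. y i * f i)" for f
    using assms(2,3) by (auto intro: sum.cong)
  have "(\<Sum>i\<in>insert i0 I. (y(i0 := \<sigma>)) i * of_int (M i j)) = (\<Sum>i\<in>I. y i * of_int (M i j - q j * s i))"
    if "j \<in> J" for j
  proof -
    have "\<sigma> * of_int (M i0 j) = of_int (q j) * (of_int d * \<sigma>)" using assms(5)[OF that] by simp
    then show ?thesis unfolding sum_insert d\<sigma>
      by (simp add: algebra_simps sum_subtractf sum_distrib_left)
  qed
  then have "(\<Sum>i\<in>insert i0 I. (y(i0 := \<sigma>)) i * c i) \<in> \<int>"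
    using assms(1) y unfolding in_bidual_lattice_def by simp
  moreover have "\<sigma> * c i0 = of_int z * (of_int d * \<sigma>)" using assms(6) by simp
  then have "(\<Sum>i\<in>insert i0 I. (y(i0 := \<sigma>)) i * c i) = (\<Sum>i\<in>I. y i * (c i - of_int z * of_int (s i)))"
    unfolding sum_insert d\<sigma> by (simp add: algebra_simps sum_subtractf sum_distrib_left)
  ultimately show "(\<Sum>i\<in>I. y i * (c i - of_int z * of_int (s i))) \<in> \<int>" by simp
qed

lemma in_bidual_lattice_integer_solution:
  assumes "finite I" "finite J" "in_bidual_lattice M I J c"
  obtains x where "\<And>i. i \<in> I \<Longrightarrow> c i = of_int (\<Sum>j\<in>J. M i j * x j)"
  using assms(1,3)
proof (induction I arbitrary: M c thesis rule: finite_induct)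
  case empty
  then show ?case by simp
next
  case (insert i0 I)
  define d where "d = Gcd ((\<lambda>j. M i0 j) ` J)"
  have "in_bidual_lattice M {i0} J c"
    using in_bidual_lattice_subset insert.prems(2) insert.hyps(1) by blast
  then obtain z where z: "c i0 = of_int d * of_int z"
    unfolding d_def using assms(2) by (rule in_bidual_lattice_singleton)
  show ?case
  proof (cases "d = 0")
    case True
    then have "M i0 j = 0" if "j \<in> J" for j using that assms(2) by (force simp: d_def)
    moreover obtain x where "\<And>i. i \<in> I \<Longrightarrow> c i = of_int (\<Sum>j\<in>J. M i j * x j)"
      using insert.IH in_bidual_lattice_subset[OF insert.prems(2)] insert.hyps(1) by blast
    ultimately have "c i = of_int (\<Sum>j\<in>J. M i j * x j)" if "i \<in> insert i0 I" for i
      using that z True by (cases "i = i0") simp_all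
    then show ?thesis by (rule insert.prems(1))
  next
    case False
    obtain \<beta> where \<beta>: "(\<Sum>j\<in>J. \<beta> j * M i0 j) = d"
      using sum_mult_eq_Gcd[OF assms(2)] unfolding d_def by blast
    define q where "q j = M i0 j div d" for j
    define s where "s i = (\<Sum>j\<in>J. \<beta> j * M i j)" for i
    define M' where "M' i j = M i j - q j * s i" for i j
    define c' where "c' i = c i - of_int z * of_int (s i)" for i
    have Mq: "M i0 j = d * q j" if "j \<in> J" for j
      using that unfolding q_def d_def by simp
    have "in_bidual_lattice M' I J c'"
      unfolding M'_def c'_def using insert.prems(2) insert.hyps False Mq z
      by (rule in_bidual_lattice_column_reduction)
    then obtain x' where x': "\<And>i. i \<in> I \<Longrightarrow> c' i = of_int (\<Sum>j\<in>J. M' i j * x' j)"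
      using insert.IH by blast
    have "s i0 = d" using \<beta> by (simp add: s_def mult.commute)
    then have "c' i0 = of_int (\<Sum>j\<in>J. M' i0 j * x' j)"
      using z Mq by (simp add: M'_def c'_def)
    with x' have x'_i0: "\<And>i. i \<in> insert i0 I \<Longrightarrow> c' i = of_int (\<Sum>j\<in>J. M' i j * x' j)" by blast
    define C where "C = z - (\<Sum>k\<in>J. q k * x' k)"
    define x where "x j = x' j + C * \<beta> j" for j
    have Mx: "(\<Sum>j\<in>J. M i j * x j) = (\<Sum>j\<in>J. M i j * x' j) + C * s i" for i
      by (simp add: x_def s_def algebra_simps sum.distrib sum_distrib_left)
    have M'x': "(\<Sum>j\<in>J. M' i j * x' j) = (\<Sum>j\<in>J. M i j * x' j) - s i * (\<Sum>k\<in>J. q k * x' k)" for i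
      by (simp add: M'_def algebra_simps sum_subtractf sum_distrib_left)
    have "(\<Sum>j\<in>J. M i j * x j) = (\<Sum>j\<in>J. M' i j * x' j) + z * s i" for i
      unfolding Mx M'x' C_def by (simp add: algebra_simps)
    then have "c i = of_int (\<Sum>j\<in>J. M i j * x j)" if "i \<in> insert i0 I" for i
      using x'_i0[OF that] by (simp add: c'_def)
    then show ?thesis by (rule insert.prems(1))
  qed
qed

section \<open>Minimal faces of polyhedra\<close>

lemma polyhedron_small_step:
  fixes a :: "'i::finite \<Rightarrow> 'a::real_inner"
  assumes "\<forall>i. a i \<bullet> x0 \<le> c i" "\<forall>i. a i \<bullet> x0 = c i \<longrightarrow> a i \<bullet> d = 0"
  obtains e where "e > 0" "\<forall>i. a i \<bullet> (x0 - e *\<^sub>R d) \<le> c i"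
proof -
  have "\<forall>\<^sub>F e in at_right 0. a i \<bullet> (x0 - e *\<^sub>R d) \<le> c i" for i
  proof (cases "a i \<bullet> x0 = c i")
    case True
    then show ?thesis using assms(2) by (simp add: inner_diff_right)
  next
    case False
    then have "a i \<bullet> x0 < c i" using assms(1) by (simp add: order_less_le)
    moreover have "((\<lambda>e. a i \<bullet> (x0 - e *\<^sub>R d)) \<longlongrightarrow> a i \<bullet> x0) (at_right 0)"
      by (auto intro!: tendsto_eq_intros)
    ultimately have "\<forall>\<^sub>F e in at_right 0. a i \<bullet> (x0 - e *\<^sub>R d) < c i"
      by (rule order_tendstoD(2)[rotated])
    then show ?thesis by (auto elim: eventually_mono)
  qed
  then have "\<forall>\<^sub>F e in at_right 0. e > 0 \<and> (\<forall>i. a i \<bullet> (x0 - e *\<^sub>R d) \<le> c i)"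
    by (intro eventually_conj eventually_at_right_less) (simp add: eventually_all_finite)
  then show ?thesis using that eventually_happens'[OF trivial_limit_at_right_real] by blast
qed

lemma face_of_polyhedron_mem_if_active_eq:
  fixes a :: "'i::finite \<Rightarrow> 'a::real_inner"
  assumes F: "F face_of {x. \<forall>i. a i \<bullet> x \<le> c i}" and "x0 \<in> F"
    and x: "\<forall>i. a i \<bullet> x \<le> c i" and active: "\<forall>i. a i \<bullet> x0 = c i \<longrightarrow> a i \<bullet> x = c i"
  shows "x \<in> F"
proof (cases "x = x0")
  case True
  then show ?thesis using \<open>x0 \<in> F\<close> by simp
next
  case False
  define d where "d = x - x0"
  have "x0 \<in> {x. \<forall>i. a i \<bullet> x \<le> c i}" using F \<open>x0 \<in> F\<close> face_of_imp_subset by blast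
  moreover have "\<forall>i. a i \<bullet> x0 = c i \<longrightarrow> a i \<bullet> d = 0" using active by (simp add: d_def inner_diff_right)
  ultimately obtain e where e: "e > 0" "\<forall>i. a i \<bullet> (x0 - e *\<^sub>R d) \<le> c i"
    using polyhedron_small_step by blast
  have "x0 = (1 - 1 / (1 + e)) *\<^sub>R x + (1 / (1 + e)) *\<^sub>R (x0 - e *\<^sub>R d)"
    using e(1) by (simp add: d_def field_simps scaleR_left_distrib[symmetric])
  moreover have "x - (x0 - e *\<^sub>R d) = (1 + e) *\<^sub>R d"
    by (simp add: d_def algebra_simps)
  then have "x \<noteq> x0 - e *\<^sub>R d"
    using e(1) False by (auto simp: d_def)
  ultimately have "x0 \<in> open_segment x (x0 - e *\<^sub>R d)"
    using e(1) unfolding in_segment by (intro conjI exI[of _ "1 / (1 + e)"]) auto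
  then show ?thesis using F \<open>x0 \<in> F\<close> x e(2) unfolding face_of_def by blast
qed

lemma polyhedron_more_active_point:
  fixes a :: "'i::finite \<Rightarrow> 'a::real_inner"
  assumes x0: "\<forall>i. a i \<bullet> x0 \<le> c i" and active: "\<forall>i. a i \<bullet> x0 = c i \<longrightarrow> a i \<bullet> x = c i"
    and k: "a k \<bullet> x > c k"
  obtains x1 where "\<forall>i. a i \<bullet> x1 \<le> c i" "{i. a i \<bullet> x0 = c i} \<subset> {i. a i \<bullet> x1 = c i}"
proof -
  define d where "d = x - x0"
  have d_active: "a i \<bullet> d = 0" if "a i \<bullet> x0 = c i" for i
    using active that by (simp add: d_def inner_diff_right)
  define K where "K = {i. a i \<bullet> d > 0}"
  define g where "g i = (c i - a i \<bullet> x0) / (a i \<bullet> d)" for i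
  have "k \<in> K" using k x0[rule_format, of k] by (simp add: K_def d_def inner_diff_right)
  then obtain k1 where k1: "k1 \<in> K" "g k1 = Min (g ` K)"
    using Min_in[of "g ` K"] by fastforce
  define x1 where "x1 = x0 + g k1 *\<^sub>R d"
  have g_nonneg: "g i \<ge> 0" if "i \<in> K" for i
    using that x0 by (simp add: g_def K_def)
  have "a i \<bullet> x1 \<le> c i" for i
  proof (cases "i \<in> K")
    case True
    then have "g k1 * (a i \<bullet> d) \<le> g i * (a i \<bullet> d)"
      using k1 by (intro mult_right_mono) (auto simp: K_def)
    also have "\<dots> = c i - a i \<bullet> x0" using True by (simp add: g_def K_def)
    finally show ?thesis by (simp add: x1_def inner_add_right)
  next
    case False
    then have "g k1 * (a i \<bullet> d) \<le> 0"
      using g_nonneg[OF k1(1)] by (simp add: K_def mult_nonneg_nonpos)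
    then show ?thesis using x0[rule_format, of i] by (simp add: x1_def inner_add_right)
  qed
  moreover have "{i. a i \<bullet> x0 = c i} \<subseteq> {i. a i \<bullet> x1 = c i}"
    using d_active by (auto simp: x1_def inner_add_right)
  moreover have "a k1 \<bullet> x1 = c k1" "a k1 \<bullet> x0 \<noteq> c k1"
    using k1(1) d_active by (auto simp: x1_def g_def K_def inner_add_right)
  ultimately show ?thesis using that by blast
qed

lemma face_of_polyhedron_active_subspace:
  fixes a :: "'i::finite \<Rightarrow> 'a::real_inner"
  assumes F: "F face_of {x. \<forall>i. a i \<bullet> x \<le> c i}" and "F \<noteq> {}"
  obtains x0 where "x0 \<in> F" "{x. \<forall>i. a i \<bullet> x0 = c i \<longrightarrow> a i \<bullet> x = c i} \<subseteq> F"
proof -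
  have FP: "\<forall>i. a i \<bullet> x \<le> c i" if "x \<in> F" for x
    using F face_of_imp_subset that by blast
  obtain x0 where "x0 \<in> F" and x0_max: "\<And>x. x \<in> F \<Longrightarrow> card {i. a i \<bullet> x = c i} \<le> card {i. a i \<bullet> x0 = c i}"
    using ex_has_greatest_nat[of "\<lambda>x. x \<in> F" _ "\<lambda>x. card {i. a i \<bullet> x = c i}" "Suc CARD('i)"]
      \<open>F \<noteq> {}\<close> by (auto simp: card_mono le_imp_less_Suc)
  have "x \<in> F" if active: "\<forall>i. a i \<bullet> x0 = c i \<longrightarrow> a i \<bullet> x = c i" for x
  proof (cases "\<forall>i. a i \<bullet> x \<le> c i")
    case True
    then show ?thesis using face_of_polyhedron_mem_if_active_eq[OF F \<open>x0 \<in> F\<close> _ active] by simp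
  next
    case False
    then obtain k where "a k \<bullet> x > c k" by (auto simp: not_le)
    then obtain x1 where x1: "\<forall>i. a i \<bullet> x1 \<le> c i" "{i. a i \<bullet> x0 = c i} \<subset> {i. a i \<bullet> x1 = c i}"
      using polyhedron_more_active_point[OF FP[OF \<open>x0 \<in> F\<close>] active] by blast
    have "\<forall>i. a i \<bullet> x0 = c i \<longrightarrow> a i \<bullet> x1 = c i" using x1(2) by blast
    with x1(1) have "x1 \<in> F" by (rule face_of_polyhedron_mem_if_active_eq[OF F \<open>x0 \<in> F\<close>])
    moreover have "card {i. a i \<bullet> x0 = c i} < card {i. a i \<bullet> x1 = c i}"
      using x1(2) by (simp add: psubset_card_mono)
    ultimately show ?thesis using x0_max[of x1] by simp
  qed
  then show ?thesis using that \<open>x0 \<in> F\<close> by blast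
qed


section \<open>The dual program\<close>

definition real_row :: "int ^ 'n ^ 'm \<Rightarrow> 'm \<Rightarrow> real ^ 'n" where
  "real_row A i = (\<chi> j. of_int (A $ i $ j))"

lemma inner_real_row: "real_row A i \<bullet> x = (\<Sum>j\<in>UNIV. of_int (A $ i $ j) * x $ j)"
  by (simp add: real_row_def inner_vec_def)

lemma polyhedron_of_real_row: "polyhedron_of A b = {x. \<forall>i. real_row A i \<bullet> x \<le> of_int (b $ i)}"
  by (simp add: polyhedron_of_def inner_real_row)

lemma dual_feasible_objective_eq:
  assumes "y \<in> dual_feasible A w"
  shows "(\<Sum>j\<in>UNIV. of_int (w $ j) * x $ j) = (\<Sum>i\<in>UNIV. y $ i * (real_row A i \<bullet> x))"
proof -
  have "of_int (w $ j) = (\<Sum>i\<in>UNIV. y $ i * of_int (A $ i $ j))" for j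
    using assms by (simp add: dual_feasible_def)
  then have "(\<Sum>j\<in>UNIV. of_int (w $ j) * x $ j)
      = (\<Sum>j\<in>UNIV. \<Sum>i\<in>UNIV. y $ i * (of_int (A $ i $ j) * x $ j))"
    by (simp add: sum_distrib_right mult.assoc)
  also have "\<dots> = (\<Sum>i\<in>UNIV. y $ i * (real_row A i \<bullet> x))"
    by (subst sum.swap) (simp add: inner_real_row sum_distrib_left)
  finally show ?thesis .
qed

lemma weak_duality:
  assumes "y \<in> dual_feasible A w" "x \<in> polyhedron_of A b"
  shows "(\<Sum>j\<in>UNIV. of_int (w $ j) * x $ j) \<le> dual_obj b y"
  unfolding dual_feasible_objective_eq[OF assms(1)] dual_obj_def
proof (rule sum_mono)
  fix i
  have "0 \<le> y $ i" using assms(1) by (simp add: dual_feasible_def)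
  moreover have "real_row A i \<bullet> x \<le> of_int (b $ i)" using assms(2) by (simp add: polyhedron_of_real_row)
  ultimately show "y $ i * (real_row A i \<bullet> x) \<le> of_int (b $ i) * y $ i"
    by (simp add: mult.commute mult_left_mono)
qed

lemma dual_optimal_if_objective_eq:
  assumes "y \<in> dual_feasible A w" "x \<in> polyhedron_of A b"
    and "dual_obj b y = (\<Sum>j\<in>UNIV. of_int (w $ j) * x $ j)"
  shows "dual_optimal A b w y"
  using assms weak_duality[OF _ assms(2)] by (simp add: dual_optimal_def)

lemma totally_dual_padic_optimal_value:
  assumes "totally_dual_padic p A b" "p > 0" "dual_optimal A b w y"
  shows "padic_rat p (dual_obj b y)"
proof -
  obtain y' where y': "dual_optimal A b w y'" "padic_vec p y'"
    using assms(1,3) unfolding totally_dual_padic_def by blast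
  then have "dual_obj b y = dual_obj b y'"
    using assms(3) unfolding dual_optimal_def by (meson order_antisym)
  also have "padic_rat p \<dots>"
    unfolding dual_obj_def using assms(2) y'(2)
    by (intro padic_rat_sum padic_rat_of_int_mult) (simp_all add: padic_vec_def)
  finally show ?thesis .
qed

lemma dual_optimal_value_Ints:
  assumes "coprime p q" "p > 0" "q > 0" "totally_dual_padic p A b" "totally_dual_padic q A b"
    and "dual_optimal A b w y"
  shows "dual_obj b y \<in> \<int>"
  using assms by (intro padic_rat_coprime_Ints[OF assms(1)] totally_dual_padic_optimal_value)

lemma active_rows_in_bidual_lattice:
  fixes A :: "int ^ 'n ^ 'm" and b :: "int ^ 'm"
  assumes x0: "x0 \<in> polyhedron_of A b"
    and integral_value: "\<And>w y. dual_optimal A b w y \<Longrightarrow> dual_obj b y \<in> \<int>"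
  shows "in_bidual_lattice (\<lambda>i j. A $ i $ j) {i. real_row A i \<bullet> x0 = of_int (b $ i)} UNIV
    (\<lambda>i. of_int (b $ i))"
  unfolding in_bidual_lattice_def
proof (intro allI impI)
  define T where "T = {i. real_row A i \<bullet> x0 = of_int (b $ i)}"
  fix y :: "'m \<Rightarrow> real"
  assume yA: "\<forall>j\<in>UNIV. (\<Sum>i\<in>T. y i * of_int (A $ i $ j)) \<in> \<int>"
  have frac_split: "(\<Sum>i\<in>T. frac (y i) * of_int (g i))
      = (\<Sum>i\<in>T. y i * of_int (g i)) - of_int (\<Sum>i\<in>T. \<lfloor>y i\<rfloor> * g i)" for g :: "'m \<Rightarrow> int"
    by (simp add: frac_def algebra_simps sum_subtractf)
  define u :: "real ^ 'm" where "u = (\<chi> i. if i \<in> T then frac (y i) else 0)"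
  define w :: "int ^ 'n" where "w = (\<chi> j. \<lfloor>\<Sum>i\<in>T. frac (y i) * of_int (A $ i $ j)\<rfloor>)"
  have w: "of_int (w $ j) = (\<Sum>i\<in>T. frac (y i) * of_int (A $ i $ j))" for j
  proof -
    have "(\<Sum>i\<in>T. frac (y i) * of_int (A $ i $ j)) \<in> \<int>"
      unfolding frac_split using yA by (intro Ints_diff Ints_of_int) simp
    then show ?thesis by (auto simp: w_def elim!: Ints_cases)
  qed
  have u_feasible: "u \<in> dual_feasible A w"
    by (simp add: dual_feasible_def u_def w sum_mult_indicator_subset)
  have "dual_obj b u = (\<Sum>i\<in>UNIV. u $ i * of_int (b $ i))"
    by (simp add: dual_obj_def mult.commute)
  also have "\<dots> = (\<Sum>i\<in>T. frac (y i) * of_int (b $ i))"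
    by (simp add: u_def sum_mult_indicator_subset)
  finally have obj_u: "dual_obj b u = (\<Sum>i\<in>T. frac (y i) * of_int (b $ i))" .
  also have "\<dots> = (\<Sum>i\<in>T. frac (y i) * (real_row A i \<bullet> x0))"
    by (rule sum.cong) (simp_all add: T_def)
  also have "\<dots> = (\<Sum>i\<in>UNIV. u $ i * (real_row A i \<bullet> x0))"
    by (simp add: u_def sum_mult_indicator_subset)
  also have "\<dots> = (\<Sum>j\<in>UNIV. of_int (w $ j) * x0 $ j)"
    by (rule dual_feasible_objective_eq[OF u_feasible, symmetric])
  finally have "dual_obj b u \<in> \<int>"
    using integral_value dual_optimal_if_objective_eq[OF u_feasible x0] by blast
  then have "dual_obj b u + of_int (\<Sum>i\<in>T. \<lfloor>y i\<rfloor> * b $ i) \<in> \<int>"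
    by (intro Ints_add Ints_of_int)
  then show "(\<Sum>i\<in>T. y i * of_int (b $ i)) \<in> \<int>"
    by (simp add: obj_u frac_split)
qed

theorem theorem1p5:
  fixes A :: "int ^ 'n ^ 'm" and b :: "int ^ 'm" and p q :: nat
  assumes "prime p" and "prime q" and "p \<noteq> q"
    and "totally_dual_padic p A b" and "totally_dual_padic q A b"
  shows "integral_polyhedron (polyhedron_of A b)"
  unfolding integral_polyhedron_def
proof (intro allI impI, elim conjE)
  fix F assume F: "F face_of polyhedron_of A b" "F \<noteq> {}"
  then obtain x0 where "x0 \<in> F" and subspace_F:
    "{x. \<forall>i. real_row A i \<bullet> x0 = of_int (b $ i) \<longrightarrow> real_row A i \<bullet> x = of_int (b $ i)} \<subseteq> F"
    unfolding polyhedron_of_real_row by (rule face_of_polyhedron_active_subspace)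
  have "x0 \<in> polyhedron_of A b" using F(1) \<open>x0 \<in> F\<close> face_of_imp_subset by blast
  moreover have "dual_obj b y \<in> \<int>" if "dual_optimal A b w y" for w y
    using primes_coprime[OF assms(1-3)] prime_gt_0_nat[OF assms(1)] prime_gt_0_nat[OF assms(2)]
      assms(4,5) that by (rule dual_optimal_value_Ints)
  ultimately have "in_bidual_lattice (\<lambda>i j. A $ i $ j) {i. real_row A i \<bullet> x0 = of_int (b $ i)} UNIV
      (\<lambda>i. of_int (b $ i))"
    by (rule active_rows_in_bidual_lattice)
  then obtain z where z: "\<And>i. i \<in> {i. real_row A i \<bullet> x0 = of_int (b $ i)} \<Longrightarrow>
      of_int (b $ i) = (of_int (\<Sum>j\<in>UNIV. A $ i $ j * z j) :: real)"
    by (rule in_bidual_lattice_integer_solution[OF finite finite]) blast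
  define x :: "real ^ 'n" where "x = (\<chi> j. of_int (z j))"
  have "real_row A i \<bullet> x = of_int (b $ i)" if "real_row A i \<bullet> x0 = of_int (b $ i)" for i
    using z[of i] that by (simp add: x_def inner_real_row)
  then have "x \<in> F" using subspace_F by blast
  moreover have "integral_vec x" by (simp add: x_def integral_vec_def)
  ultimately show "\<exists>x\<in>F. integral_vec x" by blast
qed

end
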